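(* Let $\lambda,\varepsilon,\sigma\in\mathbb{R}$, $(x_0,y_0)\in\mathbb{R}^2\setminus\{(0,0)\}$, and for $0<\Delta t<1$ let $t_n=n\Delta t$, $\Delta B_{1,n}=B_1(t_{n+1})-B_1(t_n)$ for a standard scalar Brownian motion $B_1$, and define $\rho_0=\sqrt{x_0^2+y_0^2}$, $$\rho_n=\rho_{n-1}\Big[1+\Big(\lambda+\tfrac{\varepsilon^2}{2}-\tfrac{\sigma^2}{2}\Big)\Delta t+\sigma\Delta B_{1,n-1}+\tfrac{\sigma^2}{2}\Delta B_{1,n-1}^2\Big],\quad n\ge1.$$ Then there exist $\Delta t_\ddagger>0$ and constants $0<C_-<C_+$ such that for all $0<\Delta t<\Delta t_\ddagger$, almost surely, $$\limsup_{n\to\infty}\frac1{t_n}\log|\rho_n|\ge\frac1{\Delta t}\log\Big(1+\Big(\lambda+\tfrac{\varepsilon^2}{2}-\tfrac{\sigma^2}{2}\Big)\Delta t\Big)-C_-\Delta t^{1/2},$$ $$\limsup_{n\to\infty}\frac1{t_n}\log|\rho_n|\le\frac1{\Delta t}\log\Big(1+\Big(\lambda+\tfrac{\varepsilon^2}{2}-\tfrac{\sigma^2}{2}\Big)\Delta t\Big)+C_+\Delta t^{1/2}.$$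
   Context: $\rho_n$ is the Milstein approximation (written $|Z_n|$ in the paper) of the norm of the solution of $dZ=\lambda Z\,dt+\sigma Z\,dB_1+\varepsilon\begin{pmatrix}0&-1\\1&0\end{pmatrix}Z\,dB_2$, $Z(0)=(x_0,y_0)$. *)

theory Defs
  imports "HOL-Probability.Probability"
begin

definition standard_brownian_motion :: "'a measure \<Rightarrow> (real \<Rightarrow> 'a \<Rightarrow> real) \<Rightarrow> bool" where
  "standard_brownian_motion M B \<longleftrightarrow>
     prob_space M \<and>
     (\<forall>t. B t \<in> borel_measurable M) \<and>
     (AE \<omega> in M. B 0 \<omega> = 0) \<and>
     (\<forall>s t. 0 \<le> s \<longrightarrow> s < t \<longrightarrow>
        distributed M lborel (\<lambda>\<omega>. B t \<omega> - B s \<omega>) (normal_density 0 (sqrt (t - s)))) \<and>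
     (\<forall>(ts :: nat \<Rightarrow> real) n. 0 \<le> ts 0 \<longrightarrow> strict_mono ts \<longrightarrow>
        prob_space.indep_vars M (\<lambda>_. borel) (\<lambda>i \<omega>. B (ts (Suc i)) \<omega> - B (ts i) \<omega>) {..<n}) \<and>
     (AE \<omega> in M. continuous_on {0..} (\<lambda>t. B t \<omega>))"

definition bm_incr :: "(real \<Rightarrow> 'a \<Rightarrow> real) \<Rightarrow> real \<Rightarrow> nat \<Rightarrow> 'a \<Rightarrow> real" where
  "bm_incr B dt n \<omega> = B (real (Suc n) * dt) \<omega> - B (real n * dt) \<omega>"

fun milstein_rho :: "real \<Rightarrow> real \<Rightarrow> real \<Rightarrow> real \<Rightarrow> real \<Rightarrow> (real \<Rightarrow> 'a \<Rightarrow> real) \<Rightarrow> real \<Rightarrow> nat \<Rightarrow> 'a \<Rightarrow> real" where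
  "milstein_rho lam eps sig x0 y0 B dt 0 \<omega> = sqrt (x0\<^sup>2 + y0\<^sup>2)"
| "milstein_rho lam eps sig x0 y0 B dt (Suc n) \<omega> =
     milstein_rho lam eps sig x0 y0 B dt n \<omega> *
       (1 + (lam + eps\<^sup>2 / 2 - sig\<^sup>2 / 2) * dt + sig * bm_incr B dt n \<omega>
          + sig\<^sup>2 / 2 * (bm_incr B dt n \<omega>)\<^sup>2)"

end

theory Submission
  imports Defs
begin

text \<open>Taking logarithms,
  \<open>ln rho_n = ln rho_0 + (\<Sum>k<n. ln (q + \<sigma> dB_k + \<sigma>\<^sup>2 dB_k\<^sup>2 / 2))\<close> with
  \<open>q = 1 + (\<lambda> + \<epsilon>\<^sup>2/2 - \<sigma>\<^sup>2/2) dt\<close>; completing the square shows that every factor is at least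
  \<open>q - 1/2 > 0\<close>. The increments \<open>dB_k\<close> are i.i.d. \<open>N(0, dt)\<close> and the summands have finite
  fourth moments, so the strong law of large numbers (which follows from the fourth moments of the
  partial sums via Borel-Cantelli) shows that \<open>ln \<bar>rho_n\<bar> / (n dt)\<close> converges almost surely to
  \<open>\<mu> / dt\<close>, where \<open>\<mu> = E ln (q + \<sigma> dB + \<sigma>\<^sup>2 dB\<^sup>2 / 2)\<close>. Expanding the logarithm around \<open>q\<close>
  to third order and using the Gaussian moments of \<open>dB\<close> gives \<open>\<bar>\<mu> - ln q\<bar> = O(dt\<^bsup>3/2\<^esup>)\<close>,
  which after division by \<open>dt\<close> yields both bounds.\<close>

section \<open>Moments of the centered normal distribution\<close>

text \<open>The law \<open>N(0, s\<^sup>2)\<close>: the parameter is the standard deviation.\<close>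

definition centered_normal :: "real \<Rightarrow> real measure" where
  "centered_normal s = density lborel (\<lambda>x. ennreal (normal_density 0 s x))"

lemma prob_space_centered_normal: "0 < s \<Longrightarrow> prob_space (centered_normal s)"
  unfolding centered_normal_def by (rule prob_space_normal_density)

lemma sets_centered_normal [measurable_cong, simp]: "sets (centered_normal s) = sets borel"
  by (simp add: centered_normal_def)

lemma has_bochner_integral_centered_normalI:
  assumes "f \<in> borel_measurable borel"
    and "has_bochner_integral lborel (\<lambda>x. normal_density 0 s x * f x) I"
  shows "has_bochner_integral (centered_normal s) f I"
  unfolding centered_normal_def using assms by (intro has_bochner_integral_density) auto

lemma integrable_centered_normal_power: "0 < s \<Longrightarrow> integrable (centered_normal s) (\<lambda>x. x ^ k)"
  using integrable_normal_moment[of s 0 k]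
  unfolding centered_normal_def by (subst integrable_real_density) auto

lemma centered_normal_moments:
  assumes s: "0 < s"
  shows "has_bochner_integral (centered_normal s) (\<lambda>x. x) 0"
    and "has_bochner_integral (centered_normal s) (\<lambda>x. x ^ 2) (s ^ 2)"
    and "has_bochner_integral (centered_normal s) (\<lambda>x. x ^ 3) 0"
    and "has_bochner_integral (centered_normal s) (\<lambda>x. x ^ 4) (3 * s ^ 4)"
    and "has_bochner_integral (centered_normal s) (\<lambda>x. x ^ 6) (15 * s ^ 6)"
    and "has_bochner_integral (centered_normal s) (\<lambda>x. \<bar>x\<bar> ^ 3) (2 * s ^ 3 * sqrt (2 / pi))"
  using normal_moment_odd[OF s, of 0 0] normal_moment_even[OF s, of 0 1]
    normal_moment_odd[OF s, of 0 1] normal_moment_even[OF s, of 0 2]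
    normal_moment_even[OF s, of 0 3] normal_moment_abs_odd[OF s, of 0 1]
  by (auto intro!: has_bochner_integral_centered_normalI
           simp: fact_numeral power_divide simp flip: power_mult)

section \<open>A third-order Taylor bound for the logarithm\<close>

lemma has_real_derivative_ln_taylor_remainder:
  "-1 < x \<Longrightarrow> ((\<lambda>x. ln (1 + x) - x + x\<^sup>2 / 2) has_real_derivative x\<^sup>2 / (1 + x)) (at x)"
  by (auto intro!: derivative_eq_intros simp: field_simps power2_eq_square)

lemma ln_one_plus_taylor_bounds_nonneg:
  fixes u :: real
  assumes "0 \<le> u"
  shows "0 \<le> ln (1 + u) - u + u\<^sup>2 / 2" and "ln (1 + u) - u + u\<^sup>2 / 2 \<le> u ^ 3 / 3"
proof -
  show "0 \<le> ln (1 + u) - u + u\<^sup>2 / 2"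
    using DERIV_nonneg_imp_nondecreasing[of 0 u "\<lambda>x. ln (1 + x) - x + x\<^sup>2 / 2"] assms
      has_real_derivative_ln_taylor_remainder by force
  have "\<exists>y. ((\<lambda>x. x ^ 3 / 3 - (ln (1 + x) - x + x\<^sup>2 / 2)) has_real_derivative y) (at x) \<and> 0 \<le> y"
    if "0 \<le> x" for x :: real
  proof (intro exI conjI)
    show "((\<lambda>x. x ^ 3 / 3 - (ln (1 + x) - x + x\<^sup>2 / 2)) has_real_derivative x\<^sup>2 - x\<^sup>2 / (1 + x)) (at x)"
      using that by (auto intro!: derivative_eq_intros simp: field_simps power2_eq_square)
    show "0 \<le> x\<^sup>2 - x\<^sup>2 / (1 + x)"
      using that by (simp add: field_simps)
  qed
  from DERIV_nonneg_imp_nondecreasing[OF assms, of "\<lambda>x. x ^ 3 / 3 - (ln (1 + x) - x + x\<^sup>2 / 2)"] this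
  show "ln (1 + u) - u + u\<^sup>2 / 2 \<le> u ^ 3 / 3"
    by force
qed

lemma ln_one_plus_taylor_bounds_nonpos:
  fixes u :: real
  assumes "-2/3 \<le> u" and "u \<le> 0"
  shows "ln (1 + u) - u + u\<^sup>2 / 2 \<le> 0" and "u ^ 3 \<le> ln (1 + u) - u + u\<^sup>2 / 2"
proof -
  show "ln (1 + u) - u + u\<^sup>2 / 2 \<le> 0"
    using DERIV_nonneg_imp_nondecreasing[of u 0 "\<lambda>x. ln (1 + x) - x + x\<^sup>2 / 2"] assms
      has_real_derivative_ln_taylor_remainder by force
  have "\<exists>y. ((\<lambda>x. x ^ 3 - (ln (1 + x) - x + x\<^sup>2 / 2)) has_real_derivative y) (at x) \<and> 0 \<le> y"
    if "u \<le> x" for x :: real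
  proof (intro exI conjI)
    have "-1 < x"
      using that assms by simp
    then show "((\<lambda>x. x ^ 3 - (ln (1 + x) - x + x\<^sup>2 / 2)) has_real_derivative 3 * x\<^sup>2 - x\<^sup>2 / (1 + x)) (at x)"
      by (auto intro!: derivative_eq_intros simp: field_simps power2_eq_square)
    have "x\<^sup>2 * 1 \<le> x\<^sup>2 * (3 * (1 + x))"
      using that assms by (intro mult_left_mono) auto
    with \<open>-1 < x\<close> show "0 \<le> 3 * x\<^sup>2 - x\<^sup>2 / (1 + x)"
      by (simp add: field_simps)
  qed
  from DERIV_nonneg_imp_nondecreasing[OF assms(2), of "\<lambda>x. x ^ 3 - (ln (1 + x) - x + x\<^sup>2 / 2)"] this
  show "u ^ 3 \<le> ln (1 + u) - u + u\<^sup>2 / 2"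
    by force
qed

lemma abs_ln_one_plus_taylor_le:
  fixes u :: real
  assumes "-2/3 \<le> u"
  shows "\<bar>ln (1 + u) - u + u\<^sup>2 / 2\<bar> \<le> \<bar>u\<bar> ^ 3"
proof (cases "0 \<le> u")
  case True
  then show ?thesis
    using ln_one_plus_taylor_bounds_nonneg[OF True] by simp
next
  case False
  then have "\<bar>u\<bar> ^ 3 = - (u ^ 3)"
    by (simp add: power3_eq_cube)
  then show ?thesis
    using ln_one_plus_taylor_bounds_nonpos[OF assms] False by simp
qed

lemma power3_add_le_nonneg:
  fixes a b :: real
  assumes "0 \<le> a" "0 \<le> b"
  shows "(a + b) ^ 3 \<le> 4 * (a ^ 3 + b ^ 3)"
proof -
  have "0 \<le> 3 * (a + b) * (a - b)\<^sup>2"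
    using assms by simp
  then show ?thesis
    by (simp add: power2_eq_square power3_eq_cube algebra_simps)
qed

lemma one_plus_mult_bounds:
  fixes a dt :: real
  assumes "0 \<le> dt" and "\<bar>a\<bar> * dt \<le> 1/4"
  shows "3/4 \<le> 1 + a * dt" and "1 + a * dt \<le> 5/4"
proof -
  have "\<bar>a * dt\<bar> \<le> 1/4"
    using assms by (simp add: abs_mult)
  then show "3/4 \<le> 1 + a * dt" and "1 + a * dt \<le> 5/4"
    unfolding abs_le_iff by linarith+
qed

definition milstein_factor :: "real \<Rightarrow> real \<Rightarrow> real \<Rightarrow> real" where
  "milstein_factor q \<sigma> x = q + \<sigma> * x + \<sigma>\<^sup>2 / 2 * x\<^sup>2"

lemma milstein_factor_ge: "q - 1/2 \<le> milstein_factor q \<sigma> x"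
proof -
  have "milstein_factor q \<sigma> x = q - 1/2 + (\<sigma> * x + 1)\<^sup>2 / 2"
    by (simp add: milstein_factor_def power2_eq_square algebra_simps)
  then show ?thesis
    by simp
qed

lemma abs_milstein_increment_cube_le:
  fixes \<sigma> x :: real
  shows "\<bar>\<sigma> * x + \<sigma>\<^sup>2 / 2 * x\<^sup>2\<bar> ^ 3 \<le> 4 * (\<bar>\<sigma>\<bar> ^ 3 * \<bar>x\<bar> ^ 3 + \<sigma> ^ 6 * x ^ 6 / 8)"
proof -
  have "\<bar>\<sigma> * x + \<sigma>\<^sup>2 / 2 * x\<^sup>2\<bar> \<le> \<bar>\<sigma>\<bar> * \<bar>x\<bar> + \<sigma>\<^sup>2 / 2 * x\<^sup>2"
    using abs_triangle_ineq[of "\<sigma> * x" "\<sigma>\<^sup>2 / 2 * x\<^sup>2"] by (simp add: abs_mult)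
  then have "\<bar>\<sigma> * x + \<sigma>\<^sup>2 / 2 * x\<^sup>2\<bar> ^ 3 \<le> (\<bar>\<sigma>\<bar> * \<bar>x\<bar> + \<sigma>\<^sup>2 / 2 * x\<^sup>2) ^ 3"
    by (intro power_mono) auto
  also have "\<dots> \<le> 4 * ((\<bar>\<sigma>\<bar> * \<bar>x\<bar>) ^ 3 + (\<sigma>\<^sup>2 / 2 * x\<^sup>2) ^ 3)"
    by (intro power3_add_le_nonneg) auto
  also have "\<dots> = 4 * (\<bar>\<sigma>\<bar> ^ 3 * \<bar>x\<bar> ^ 3 + \<sigma> ^ 6 * x ^ 6 / 8)"
    by (simp add: power_mult_distrib power_divide flip: power_mult)
  finally show ?thesis .
qed

text \<open>The quartic below is \<open>u - u\<^sup>2 / 2\<close> for \<open>u = (\<sigma> x + \<sigma>\<^sup>2 x\<^sup>2 / 2) / q\<close>,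
  expanded in powers of \<open>x\<close>.\<close>

lemma ln_milstein_factor_taylor:
  assumes q: "3/4 \<le> q" "q \<le> 5/4"
  shows "\<bar>ln (milstein_factor q \<sigma> x) - ln q
          - (\<sigma> / q * x + (\<sigma>\<^sup>2 / (2 * q) - \<sigma>\<^sup>2 / (2 * q\<^sup>2)) * x\<^sup>2
             - \<sigma> ^ 3 / (2 * q\<^sup>2) * x ^ 3 - \<sigma> ^ 4 / (8 * q\<^sup>2) * x ^ 4)\<bar>
         \<le> 10 * (\<bar>\<sigma>\<bar> ^ 3 * \<bar>x\<bar> ^ 3 + \<sigma> ^ 6 * x ^ 6 / 8)"
proof -
  define v where "v = \<sigma> * x + \<sigma>\<^sup>2 / 2 * x\<^sup>2"
  define u where "u = v / q"
  have "0 < q"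
    using q by simp
  have "-1/2 \<le> v"
    using milstein_factor_ge[of 0 \<sigma> x] by (simp add: v_def milstein_factor_def)
  then have "-2/3 \<le> u"
    using q by (simp add: u_def field_simps)
  have taylor_polynomial:
    "\<sigma> / q * x + (\<sigma>\<^sup>2 / (2 * q) - \<sigma>\<^sup>2 / (2 * q\<^sup>2)) * x\<^sup>2 - \<sigma> ^ 3 / (2 * q\<^sup>2) * x ^ 3
       - \<sigma> ^ 4 / (8 * q\<^sup>2) * x ^ 4 = u - u\<^sup>2 / 2"
    using \<open>0 < q\<close>
    by (simp add: u_def v_def field_simps power2_eq_square power3_eq_cube power4_eq_xxxx)
  have "27/64 \<le> q ^ 3"
    using power_mono[OF q(1), of 3] by (simp add: power_divide)
  have "\<bar>u\<bar> ^ 3 = \<bar>v\<bar> ^ 3 / q ^ 3"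
    using \<open>0 < q\<close> by (simp add: u_def abs_divide power_divide)
  also have "\<dots> \<le> \<bar>v\<bar> ^ 3 / (27/64)"
    using \<open>27/64 \<le> q ^ 3\<close> \<open>0 < q\<close> by (intro divide_left_mono) auto
  also have "\<dots> \<le> 10 * (\<bar>\<sigma>\<bar> ^ 3 * \<bar>x\<bar> ^ 3 + \<sigma> ^ 6 * x ^ 6 / 8)"
  proof -
    have "64/27 * V \<le> 10 * (A + B / 8)" if "V \<le> 4 * (A + B / 8)" "0 \<le> A" "0 \<le> B"
      for V A B :: real
      using that by (simp add: field_simps)
    from this[OF abs_milstein_increment_cube_le[of \<sigma> x, folded v_def]] show ?thesis
      by simp
  qed
  finally have "\<bar>u\<bar> ^ 3 \<le> 10 * (\<bar>\<sigma>\<bar> ^ 3 * \<bar>x\<bar> ^ 3 + \<sigma> ^ 6 * x ^ 6 / 8)" .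
  moreover have "milstein_factor q \<sigma> x = q * (1 + u)"
    using \<open>0 < q\<close> by (simp add: milstein_factor_def u_def v_def field_simps)
  then have "ln (milstein_factor q \<sigma> x) = ln q + ln (1 + u)"
    using \<open>0 < q\<close> \<open>-2/3 \<le> u\<close> by (simp add: ln_mult)
  ultimately show ?thesis
    unfolding taylor_polynomial using abs_ln_one_plus_taylor_le[OF \<open>-2/3 \<le> u\<close>] by simp
qed

lemma abs_le_one_plus_square: "\<bar>x::real\<bar> \<le> 1 + x\<^sup>2"
proof -
  have "0 \<le> (\<bar>x\<bar> - 1/2)\<^sup>2"
    by simp
  then show ?thesis
    by (simp add: power2_eq_square algebra_simps)
qed

lemma abs_ln_milstein_factor_le:
  assumes q: "3/4 \<le> q" "q \<le> 5/4"
  shows "\<bar>ln (milstein_factor q \<sigma> x)\<bar> \<le> (5 + \<bar>\<sigma>\<bar> + \<sigma>\<^sup>2) * (1 + x\<^sup>2)"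
proof -
  define w where "w = milstein_factor q \<sigma> x"
  have "1/4 \<le> w"
    using milstein_factor_ge[of q \<sigma> x] q by (simp add: w_def)
  have "ln w \<le> w"
    using ln_le_minus_one[of w] \<open>1/4 \<le> w\<close> by simp
  moreover have "1 / w \<le> 4"
    using \<open>1/4 \<le> w\<close> by (simp add: field_simps)
  then have "ln (1 / w) \<le> 3"
    using ln_le_minus_one[of "1 / w"] \<open>1/4 \<le> w\<close> by simp
  then have "-3 \<le> ln w"
    using \<open>1/4 \<le> w\<close> by (simp add: ln_div)
  ultimately have "\<bar>ln w\<bar> \<le> w + 3"
    using \<open>1/4 \<le> w\<close> by linarith
  also have "\<dots> \<le> 17/4 + \<bar>\<sigma>\<bar> * \<bar>x\<bar> + \<sigma>\<^sup>2 * x\<^sup>2"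
  proof -
    have "\<sigma> * x \<le> \<bar>\<sigma>\<bar> * \<bar>x\<bar>" "0 \<le> \<sigma>\<^sup>2 * x\<^sup>2"
      by (simp_all flip: abs_mult)
    with q show ?thesis
      unfolding w_def milstein_factor_def by linarith
  qed
  also have "\<dots> \<le> (5 + \<bar>\<sigma>\<bar> + \<sigma>\<^sup>2) * (1 + x\<^sup>2)"
  proof -
    have "(5 + \<bar>\<sigma>\<bar> + \<sigma>\<^sup>2) * (1 + x\<^sup>2)
        = 17/4 + \<bar>\<sigma>\<bar> * (1 + x\<^sup>2) + \<sigma>\<^sup>2 * x\<^sup>2 + (3/4 + 5 * x\<^sup>2 + \<sigma>\<^sup>2)"
      by (simp add: algebra_simps)
    moreover have "\<bar>\<sigma>\<bar> * \<bar>x\<bar> \<le> \<bar>\<sigma>\<bar> * (1 + x\<^sup>2)"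
      using abs_le_one_plus_square by (intro mult_left_mono) auto
    moreover have "0 \<le> 3/4 + 5 * x\<^sup>2 + \<sigma>\<^sup>2"
      by (intro add_nonneg_nonneg) auto
    ultimately show ?thesis
      by linarith
  qed
  finally show ?thesis
    by (simp add: w_def)
qed

section \<open>The mean logarithmic growth over one step\<close>

lemma integrable_centered_normal_one_plus_square_power:
  assumes "0 < s"
  shows "integrable (centered_normal s) (\<lambda>x. (1 + x\<^sup>2) ^ k)"
proof -
  have "(1 + x\<^sup>2) ^ k = (\<Sum>j\<le>k. of_nat (k choose j) * x ^ (2 * j))" for x :: real
    using binomial_ring[of "x\<^sup>2" 1 k] by (simp add: add.commute power_mult)
  then show ?thesis
    using integrable_centered_normal_power[OF assms] by simp
qed

lemma integrable_centered_normal_ln_milstein_factor_power: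
  assumes q: "3/4 \<le> q" "q \<le> 5/4" and "0 < s"
  shows "integrable (centered_normal s) (\<lambda>x. ln (milstein_factor q \<sigma> x) ^ k)"
proof (rule Bochner_Integration.integrable_bound)
  show "integrable (centered_normal s) (\<lambda>x. (5 + \<bar>\<sigma>\<bar> + \<sigma>\<^sup>2) ^ k * (1 + x\<^sup>2) ^ k)"
    using integrable_centered_normal_one_plus_square_power[OF \<open>0 < s\<close>] by simp
  show "(\<lambda>x. ln (milstein_factor q \<sigma> x) ^ k) \<in> borel_measurable (centered_normal s)"
    by (simp add: milstein_factor_def)
  show "AE x in centered_normal s. norm (ln (milstein_factor q \<sigma> x) ^ k)
          \<le> norm ((5 + \<bar>\<sigma>\<bar> + \<sigma>\<^sup>2) ^ k * (1 + x\<^sup>2) ^ k)"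
    using abs_ln_milstein_factor_le[OF q]
    by (auto simp: power_abs simp flip: power_mult_distrib intro!: power_mono)
qed

lemma has_bochner_integral_centered_normal_quartic:
  assumes "0 < s"
  shows "has_bochner_integral (centered_normal s)
           (\<lambda>x. c1 * x + c2 * x\<^sup>2 - c3 * x ^ 3 - c4 * x ^ 4) (c2 * s\<^sup>2 - 3 * c4 * s ^ 4)"
proof -
  have "has_bochner_integral (centered_normal s) (\<lambda>x. c1 * x + c2 * x\<^sup>2 - c3 * x ^ 3 - c4 * x ^ 4)
          (c1 * 0 + c2 * s\<^sup>2 - c3 * 0 - c4 * (3 * s ^ 4))"
    using centered_normal_moments[OF assms]
    by (intro has_bochner_integral_diff has_bochner_integral_add has_bochner_integral_mult_right)
  then show ?thesis
    by (rule has_bochner_integral_cong[THEN iffD1, rotated -1]) simp_all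
qed

lemma has_bochner_integral_centered_normal_milstein_remainder:
  assumes "0 < s"
  shows "has_bochner_integral (centered_normal s)
           (\<lambda>x. 10 * (\<bar>\<sigma>\<bar> ^ 3 * \<bar>x\<bar> ^ 3 + \<sigma> ^ 6 * x ^ 6 / 8))
           (10 * (\<bar>\<sigma>\<bar> ^ 3 * (2 * s ^ 3 * sqrt (2 / pi)) + \<sigma> ^ 6 * (15 * s ^ 6) / 8))"
  using centered_normal_moments[OF assms]
  by (intro has_bochner_integral_mult_right has_bochner_integral_add
        has_bochner_integral_divide_zero) auto

lemma le_sqrt_self:
  fixes x :: real
  assumes "0 \<le> x" "x \<le> 1"
  shows "x \<le> sqrt x"
  using assms by (intro real_le_rsqrt) (simp add: power2_eq_square mult_left_le)

lemma milstein_taylor_polynomial_mean_le: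
  fixes a \<sigma> dt :: real
  assumes dt: "0 < dt" "dt \<le> 1" and "\<bar>a\<bar> * dt \<le> 1/4"
  defines "q \<equiv> 1 + a * dt"
  shows "\<bar>(\<sigma>\<^sup>2 / (2 * q) - \<sigma>\<^sup>2 / (2 * q\<^sup>2)) * dt - 3 * (\<sigma> ^ 4 / (8 * q\<^sup>2)) * dt\<^sup>2\<bar>
         \<le> (\<sigma>\<^sup>2 * \<bar>a\<bar> + \<sigma> ^ 4) * (dt * sqrt dt)"
proof -
  have "3/4 \<le> q"
    using one_plus_mult_bounds(1)[of dt a] assms by (simp add: q_def)
  then have "9/16 \<le> q\<^sup>2"
    using power_mono[of "3/4" q 2] by (simp add: power_divide)
  then have inv_q: "1 / q\<^sup>2 \<le> 2"
    using \<open>3/4 \<le> q\<close> by (simp add: field_simps)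
  have "(\<sigma>\<^sup>2 / (2 * q) - \<sigma>\<^sup>2 / (2 * q\<^sup>2)) * dt - 3 * (\<sigma> ^ 4 / (8 * q\<^sup>2)) * dt\<^sup>2
      = (\<sigma>\<^sup>2 * (q - 1) * dt / 2 - 3 * \<sigma> ^ 4 * dt\<^sup>2 / 8) * (1 / q\<^sup>2)"
    using \<open>3/4 \<le> q\<close> by (simp add: field_simps power2_eq_square)
  also have "\<dots> = (\<sigma>\<^sup>2 * a * dt\<^sup>2 / 2 - 3 * \<sigma> ^ 4 * dt\<^sup>2 / 8) * (1 / q\<^sup>2)"
    by (simp add: q_def power2_eq_square)
  also have "\<bar>\<dots>\<bar> \<le> (\<sigma>\<^sup>2 * \<bar>a\<bar> * dt\<^sup>2 / 2 + 3 * \<sigma> ^ 4 * dt\<^sup>2 / 8) * 2"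
    unfolding abs_mult using inv_q
    by (intro mult_mono order.trans[OF abs_triangle_ineq4]) (auto simp: abs_mult)
  also have "\<dots> \<le> (\<sigma>\<^sup>2 * \<bar>a\<bar> + \<sigma> ^ 4) * dt\<^sup>2"
    by (simp add: algebra_simps)
  also have "\<dots> \<le> (\<sigma>\<^sup>2 * \<bar>a\<bar> + \<sigma> ^ 4) * (dt * sqrt dt)"
    using dt le_sqrt_self[of dt] by (intro mult_left_mono) (auto simp: power2_eq_square)
  finally show ?thesis .
qed

lemma milstein_taylor_remainder_mean_le:
  fixes \<sigma> dt :: real
  assumes dt: "0 < dt" "dt \<le> 1"
  shows "10 * (\<bar>\<sigma>\<bar> ^ 3 * (2 * sqrt dt ^ 3 * sqrt (2 / pi)) + \<sigma> ^ 6 * (15 * sqrt dt ^ 6) / 8)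
         \<le> (20 * \<bar>\<sigma>\<bar> ^ 3 + 20 * \<sigma> ^ 6) * (dt * sqrt dt)"
proof -
  have "sqrt (2 / pi) \<le> 1"
    using pi_gt3 by simp
  then have "\<bar>\<sigma>\<bar> ^ 3 * (2 * sqrt dt ^ 3 * sqrt (2 / pi)) \<le> \<bar>\<sigma>\<bar> ^ 3 * (2 * sqrt dt ^ 3 * 1)"
    using dt by (intro mult_left_mono) auto
  also have "\<dots> = 2 * \<bar>\<sigma>\<bar> ^ 3 * (dt * sqrt dt)"
    using dt by (simp add: power3_eq_cube)
  finally have "\<bar>\<sigma>\<bar> ^ 3 * (2 * sqrt dt ^ 3 * sqrt (2 / pi)) \<le> 2 * \<bar>\<sigma>\<bar> ^ 3 * (dt * sqrt dt)" .
  moreover have "sqrt dt ^ 6 \<le> dt * sqrt dt"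
  proof -
    have "sqrt dt ^ 6 = ((sqrt dt)\<^sup>2) ^ 3"
      by (simp flip: power_mult)
    also have "\<dots> = dt * (dt * dt)"
      using dt by (simp add: power3_eq_cube)
    also have "\<dots> \<le> dt * sqrt dt"
      using dt le_sqrt_self[of dt] by (intro mult_left_mono) (auto intro: order.trans[OF mult_left_le])
    finally show ?thesis .
  qed
  then have "\<sigma> ^ 6 * sqrt dt ^ 6 \<le> \<sigma> ^ 6 * (dt * sqrt dt)"
    by (intro mult_left_mono) (auto simp: zero_le_even_power')
  moreover have "0 \<le> \<sigma> ^ 6 * (dt * sqrt dt)"
    using dt by (simp add: zero_le_even_power')
  ultimately show ?thesis
    unfolding distrib_left distrib_right by linarith
qed

lemma integral_ln_milstein_factor_error_le:
  fixes a \<sigma> dt :: real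
  assumes dt: "0 < dt" "dt \<le> 1" and a: "\<bar>a\<bar> * dt \<le> 1/4"
  shows "\<bar>(\<integral>x. ln (milstein_factor (1 + a * dt) \<sigma> x) \<partial>centered_normal (sqrt dt)) - ln (1 + a * dt)\<bar>
         \<le> (\<sigma>\<^sup>2 * \<bar>a\<bar> + \<sigma> ^ 4 + 20 * \<bar>\<sigma>\<bar> ^ 3 + 20 * \<sigma> ^ 6) * (dt * sqrt dt)"
proof -
  define q where "q = 1 + a * dt"
  define N where "N = centered_normal (sqrt dt)"
  have q: "3/4 \<le> q" "q \<le> 5/4"
    using one_plus_mult_bounds[of dt a] dt a by (simp_all add: q_def)
  have "0 < sqrt dt"
    using dt by simp
  interpret N: prob_space N
    unfolding N_def using \<open>0 < sqrt dt\<close> by (rule prob_space_centered_normal)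
  define P where "P x = \<sigma> / q * x + (\<sigma>\<^sup>2 / (2 * q) - \<sigma>\<^sup>2 / (2 * q\<^sup>2)) * x\<^sup>2
                          - \<sigma> ^ 3 / (2 * q\<^sup>2) * x ^ 3 - \<sigma> ^ 4 / (8 * q\<^sup>2) * x ^ 4" for x
  define R where "R x = 10 * (\<bar>\<sigma>\<bar> ^ 3 * \<bar>x\<bar> ^ 3 + \<sigma> ^ 6 * x ^ 6 / 8)" for x :: real
  define g where "g x = ln (milstein_factor q \<sigma> x)" for x
  have "sqrt dt ^ 4 = ((sqrt dt)\<^sup>2)\<^sup>2"
    by (simp flip: power_mult)
  then have powers: "(sqrt dt)\<^sup>2 = dt" "sqrt dt ^ 4 = dt\<^sup>2"
    using dt by simp_all
  have P_integral: "has_bochner_integral N P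
      ((\<sigma>\<^sup>2 / (2 * q) - \<sigma>\<^sup>2 / (2 * q\<^sup>2)) * dt - 3 * (\<sigma> ^ 4 / (8 * q\<^sup>2)) * dt\<^sup>2)"
    using has_bochner_integral_centered_normal_quartic[OF \<open>0 < sqrt dt\<close>]
    unfolding N_def P_def[abs_def] powers .
  have R_integral: "has_bochner_integral N R
      (10 * (\<bar>\<sigma>\<bar> ^ 3 * (2 * sqrt dt ^ 3 * sqrt (2 / pi)) + \<sigma> ^ 6 * (15 * sqrt dt ^ 6) / 8))"
    using has_bochner_integral_centered_normal_milstein_remainder[OF \<open>0 < sqrt dt\<close>]
    unfolding N_def R_def[abs_def] .
  have "integrable N g"
    using integrable_centered_normal_ln_milstein_factor_power[OF q \<open>0 < sqrt dt\<close>, of \<sigma> 1]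
    by (simp add: N_def g_def[abs_def])
  have "\<bar>g x - ln q - P x\<bar> \<le> R x" for x
    unfolding g_def P_def R_def by (rule ln_milstein_factor_taylor[OF q])
  then have "\<bar>integral\<^sup>L N (\<lambda>x. g x - ln q - P x)\<bar> \<le> integral\<^sup>L N R"
    using \<open>integrable N g\<close> P_integral R_integral
    by (intro integral_abs_bound_integral) (auto simp: has_bochner_integral_iff)
  moreover have "integral\<^sup>L N (\<lambda>x. g x - ln q - P x) = integral\<^sup>L N g - ln q - integral\<^sup>L N P"
    using \<open>integrable N g\<close> P_integral by (simp add: has_bochner_integral_iff N.prob_space)
  ultimately have "\<bar>integral\<^sup>L N g - ln q\<bar> \<le> integral\<^sup>L N R + \<bar>integral\<^sup>L N P\<bar>"
    by linarith
  also have "\<dots> \<le> (20 * \<bar>\<sigma>\<bar> ^ 3 + 20 * \<sigma> ^ 6) * (dt * sqrt dt) + (\<sigma>\<^sup>2 * \<bar>a\<bar> + \<sigma> ^ 4) * (dt * sqrt dt)"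
    using milstein_taylor_remainder_mean_le[OF dt, of \<sigma>] milstein_taylor_polynomial_mean_le[OF dt a, of \<sigma>]
      P_integral R_integral
    by (intro add_mono) (simp_all add: has_bochner_integral_integral_eq q_def)
  finally show ?thesis
    by (simp add: N_def g_def[abs_def] q_def algebra_simps)
qed

section \<open>A strong law of large numbers\<close>

context prob_space
begin

lemma integrable_power_le:
  fixes X :: "'a \<Rightarrow> real"
  assumes "random_variable borel X" and "integrable M (\<lambda>\<omega>. X \<omega> ^ m)" and "j \<le> m"
  shows "integrable M (\<lambda>\<omega>. X \<omega> ^ j)"
proof (rule Bochner_Integration.integrable_bound)
  show "integrable M (\<lambda>\<omega>. 1 + \<bar>X \<omega> ^ m\<bar>)"
    using assms(2) by simp
  show "(\<lambda>\<omega>. X \<omega> ^ j) \<in> borel_measurable M"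
    using assms(1) by measurable
  have "\<bar>X \<omega>\<bar> ^ j \<le> 1 + \<bar>X \<omega>\<bar> ^ m" for \<omega>
  proof (cases "\<bar>X \<omega>\<bar> \<le> 1")
    case True
    then show ?thesis
      using power_le_one[of "\<bar>X \<omega>\<bar>" j] by (simp add: add_increasing2)
  next
    case False
    then have "\<bar>X \<omega>\<bar> ^ j \<le> \<bar>X \<omega>\<bar> ^ m"
      using \<open>j \<le> m\<close> by (intro power_increasing) auto
    then show ?thesis
      by simp
  qed
  then show "AE \<omega> in M. norm (X \<omega> ^ j) \<le> norm (1 + \<bar>X \<omega> ^ m\<bar>)"
    by (simp add: power_abs)
qed

lemma integrable_power4_diff_const:
  fixes f :: "'a \<Rightarrow> real"
  assumes "random_variable borel f" and "integrable M (\<lambda>\<omega>. f \<omega> ^ 4)"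
  shows "integrable M (\<lambda>\<omega>. (f \<omega> - c) ^ 4)"
proof -
  have "(f \<omega> - c) ^ 4 = f \<omega> ^ 4 - 4 * c * f \<omega> ^ 3 + 6 * c\<^sup>2 * f \<omega> ^ 2 - 4 * c ^ 3 * f \<omega> ^ 1 + c ^ 4"
    for \<omega>
    by algebra
  then show ?thesis
    by (simp only:) (intro Bochner_Integration.integrable_add Bochner_Integration.integrable_diff
        integrable_mult_right integrable_const integrable_power_le[OF assms]; simp)
qed

lemma moments_add_indep:
  fixes X Y :: "'a \<Rightarrow> real"
  assumes indep: "indep_var borel X borel Y"
    and integrable: "integrable M (\<lambda>\<omega>. X \<omega> ^ 4)" "integrable M (\<lambda>\<omega>. Y \<omega> ^ 4)"
    and centered: "expectation X = 0" "expectation Y = 0"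
  shows "integrable M (\<lambda>\<omega>. (X \<omega> + Y \<omega>) ^ 4)"
    and "expectation (\<lambda>\<omega>. (X \<omega> + Y \<omega>) ^ 2) = expectation (\<lambda>\<omega>. X \<omega> ^ 2) + expectation (\<lambda>\<omega>. Y \<omega> ^ 2)"
    and "expectation (\<lambda>\<omega>. (X \<omega> + Y \<omega>) ^ 4) = expectation (\<lambda>\<omega>. X \<omega> ^ 4)
           + 6 * (expectation (\<lambda>\<omega>. X \<omega> ^ 2) * expectation (\<lambda>\<omega>. Y \<omega> ^ 2)) + expectation (\<lambda>\<omega>. Y \<omega> ^ 4)"
proof -
  have rv: "random_variable borel X" "random_variable borel Y"
    using indep by (rule indep_var_rv1, rule indep_var_rv2)
  have int_X: "integrable M (\<lambda>\<omega>. X \<omega> ^ i)" and int_Y: "integrable M (\<lambda>\<omega>. Y \<omega> ^ i)" if "i \<le> 4" for i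
    using integrable_power_le[OF rv(1) integrable(1) that] integrable_power_le[OF rv(2) integrable(2) that] .
  have product: "integrable M (\<lambda>\<omega>. X \<omega> ^ i * Y \<omega> ^ j)"
    "expectation (\<lambda>\<omega>. X \<omega> ^ i * Y \<omega> ^ j) = expectation (\<lambda>\<omega>. X \<omega> ^ i) * expectation (\<lambda>\<omega>. Y \<omega> ^ j)"
    if "i \<le> 4" "j \<le> 4" for i j
  proof -
    have "indep_var borel ((\<lambda>x. x ^ i) \<circ> X) borel ((\<lambda>x. x ^ j) \<circ> Y)"
      using indep by (rule indep_var_compose) auto
    then have "indep_var borel (\<lambda>\<omega>. X \<omega> ^ i) borel (\<lambda>\<omega>. Y \<omega> ^ j)"
      by (simp add: comp_def)
    from indep_var_integrable[OF this int_X int_Y] indep_var_lebesgue_integral[OF this int_X int_Y]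
    show "integrable M (\<lambda>\<omega>. X \<omega> ^ i * Y \<omega> ^ j)"
      "expectation (\<lambda>\<omega>. X \<omega> ^ i * Y \<omega> ^ j) = expectation (\<lambda>\<omega>. X \<omega> ^ i) * expectation (\<lambda>\<omega>. Y \<omega> ^ j)"
      using that by auto
  qed
  have square: "(X \<omega> + Y \<omega>) ^ 2 = X \<omega> ^ 2 + 2 * (X \<omega> ^ 1 * Y \<omega> ^ 1) + Y \<omega> ^ 2" for \<omega>
    by algebra
  have fourth: "(X \<omega> + Y \<omega>) ^ 4 = X \<omega> ^ 4 + 4 * (X \<omega> ^ 3 * Y \<omega> ^ 1) + 6 * (X \<omega> ^ 2 * Y \<omega> ^ 2)
      + 4 * (X \<omega> ^ 1 * Y \<omega> ^ 3) + Y \<omega> ^ 4" for \<omega>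
    by algebra
  show "integrable M (\<lambda>\<omega>. (X \<omega> + Y \<omega>) ^ 4)"
    unfolding fourth
    by (intro Bochner_Integration.integrable_add integrable_mult_right int_X int_Y product) auto
  show "expectation (\<lambda>\<omega>. (X \<omega> + Y \<omega>) ^ 2) = expectation (\<lambda>\<omega>. X \<omega> ^ 2) + expectation (\<lambda>\<omega>. Y \<omega> ^ 2)"
    unfolding square using int_X int_Y product[of 1 1] centered by simp
  show "expectation (\<lambda>\<omega>. (X \<omega> + Y \<omega>) ^ 4) = expectation (\<lambda>\<omega>. X \<omega> ^ 4)
      + 6 * (expectation (\<lambda>\<omega>. X \<omega> ^ 2) * expectation (\<lambda>\<omega>. Y \<omega> ^ 2)) + expectation (\<lambda>\<omega>. Y \<omega> ^ 4)"
    unfolding fourth using int_X int_Y product[of 3 1] product[of 2 2] product[of 1 3] centered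
    by simp
qed

lemma moments_sum_indep:
  fixes Z :: "nat \<Rightarrow> 'a \<Rightarrow> real"
  assumes indep: "\<And>n. indep_vars (\<lambda>_. borel) Z {..<n}"
    and integrable: "\<And>k. integrable M (\<lambda>\<omega>. Z k \<omega> ^ 4)"
    and centered: "\<And>k. expectation (Z k) = 0"
    and second: "\<And>k. expectation (\<lambda>\<omega>. Z k \<omega> ^ 2) = s2"
    and fourth: "\<And>k. expectation (\<lambda>\<omega>. Z k \<omega> ^ 4) = s4"
  shows "integrable M (\<lambda>\<omega>. (\<Sum>k<n. Z k \<omega>) ^ 4) \<and> expectation (\<lambda>\<omega>. \<Sum>k<n. Z k \<omega>) = 0
    \<and> expectation (\<lambda>\<omega>. (\<Sum>k<n. Z k \<omega>) ^ 2) = real n * s2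
    \<and> expectation (\<lambda>\<omega>. (\<Sum>k<n. Z k \<omega>) ^ 4) = real n * s4 + 3 * real n * (real n - 1) * s2\<^sup>2"
proof (induction n)
  case 0
  then show ?case
    by simp
next
  case (Suc n)
  define S where "S \<omega> = (\<Sum>k<n. Z k \<omega>)" for \<omega>
  have sum_Suc: "(\<Sum>k<Suc n. Z k \<omega>) = Z n \<omega> + S \<omega>" for \<omega>
    by (simp add: S_def)
  have rv: "random_variable borel (Z k)" for k
    using indep[of "Suc k"] by (auto simp: indep_vars_def)
  have IH: "integrable M (\<lambda>\<omega>. S \<omega> ^ 4)" "expectation S = 0"
    "expectation (\<lambda>\<omega>. S \<omega> ^ 2) = real n * s2"
    "expectation (\<lambda>\<omega>. S \<omega> ^ 4) = real n * s4 + 3 * real n * (real n - 1) * s2\<^sup>2"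
    using Suc.IH by (simp_all add: S_def[abs_def])
  have "indep_var borel (Z n) borel S"
    using indep_vars_sum[of "{..<n}" n Z] indep[of "Suc n"] by (simp add: S_def[abs_def] lessThan_Suc)
  note moments = moments_add_indep[OF this integrable IH(1) centered IH(2)]
  have "integrable M S"
    using integrable_power_le[OF _ IH(1), of 1] rv by (simp add: S_def[abs_def])
  moreover have "integrable M (Z n)"
    using integrable_power_le[OF rv integrable, of 1 n] by simp
  ultimately have "expectation (\<lambda>\<omega>. Z n \<omega> + S \<omega>) = 0"
    using centered IH(2) by simp
  moreover have "expectation (\<lambda>\<omega>. (Z n \<omega> + S \<omega>) ^ 2) = real (Suc n) * s2"
    using moments(2) second IH(3) by (simp add: algebra_simps)
  moreover have "expectation (\<lambda>\<omega>. (Z n \<omega> + S \<omega>) ^ 4)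
      = real (Suc n) * s4 + 3 * real (Suc n) * (real (Suc n) - 1) * s2\<^sup>2"
    unfolding moments(3) second fourth IH(3,4) by (simp add: algebra_simps power2_eq_square)
  ultimately show ?case
    unfolding sum_Suc using moments(1) by blast
qed

lemma prob_abs_sum_ge_le:
  fixes Z :: "nat \<Rightarrow> 'a \<Rightarrow> real"
  assumes indep: "\<And>n. indep_vars (\<lambda>_. borel) Z {..<n}"
    and integrable: "\<And>k. integrable M (\<lambda>\<omega>. Z k \<omega> ^ 4)"
    and centered: "\<And>k. expectation (Z k) = 0"
    and second: "\<And>k. expectation (\<lambda>\<omega>. Z k \<omega> ^ 2) = s2"
    and fourth: "\<And>k. expectation (\<lambda>\<omega>. Z k \<omega> ^ 4) = s4"
    and "0 < \<epsilon>" and "1 \<le> n"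
  shows "prob {\<omega> \<in> space M. (real n * \<epsilon>) ^ 4 \<le> (\<Sum>k<n. Z k \<omega>) ^ 4}
           \<le> (s4 + 3 * s2\<^sup>2) / \<epsilon> ^ 4 * inverse (real n ^ 2)"
proof -
  note moments = moments_sum_indep[OF indep integrable centered second fourth, of n]
  have "0 \<le> s4"
    using fourth[of 0] integral_nonneg_AE[of "\<lambda>\<omega>. Z 0 \<omega> ^ 4" M] by simp
  have "0 < (real n * \<epsilon>) ^ 4"
    using assms by simp
  then have "prob {\<omega> \<in> space M. (real n * \<epsilon>) ^ 4 \<le> (\<Sum>k<n. Z k \<omega>) ^ 4}
      \<le> expectation (\<lambda>\<omega>. (\<Sum>k<n. Z k \<omega>) ^ 4) / (real n * \<epsilon>) ^ 4"
    using moments by (intro integral_Markov_inequality_measure[where A="space M"]) auto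
  also have "\<dots> = (real n * s4 + 3 * real n * (real n - 1) * s2\<^sup>2) / (real n * \<epsilon>) ^ 4"
    using moments by simp
  also have "\<dots> \<le> (real n ^ 2 * (s4 + 3 * s2\<^sup>2)) / (real n * \<epsilon>) ^ 4"
  proof (rule divide_right_mono)
    have "real n * s4 \<le> real n * real n * s4"
      using \<open>1 \<le> n\<close> \<open>0 \<le> s4\<close> by (intro mult_right_mono) auto
    moreover have "0 \<le> real n * (s2 * s2)"
      by simp
    ultimately show "real n * s4 + 3 * real n * (real n - 1) * s2\<^sup>2 \<le> real n ^ 2 * (s4 + 3 * s2\<^sup>2)"
      by (simp add: algebra_simps power2_eq_square)
  qed simp
  also have "\<dots> = (s4 + 3 * s2\<^sup>2) / \<epsilon> ^ 4 * inverse (real n ^ 2)"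
    using assms by (simp add: field_simps power_mult_distrib power2_eq_square power4_eq_xxxx)
  finally show ?thesis .
qed

lemma AE_eventually_abs_sum_le:
  fixes Z :: "nat \<Rightarrow> 'a \<Rightarrow> real"
  assumes indep: "\<And>n. indep_vars (\<lambda>_. borel) Z {..<n}"
    and integrable: "\<And>k. integrable M (\<lambda>\<omega>. Z k \<omega> ^ 4)"
    and centered: "\<And>k. expectation (Z k) = 0"
    and second: "\<And>k. expectation (\<lambda>\<omega>. Z k \<omega> ^ 2) = s2"
    and fourth: "\<And>k. expectation (\<lambda>\<omega>. Z k \<omega> ^ 4) = s4"
    and "0 < \<epsilon>"
  shows "AE \<omega> in M. eventually (\<lambda>n. \<bar>\<Sum>k<n. Z k \<omega>\<bar> \<le> real n * \<epsilon>) sequentially"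
proof -
  define A where "A n = {\<omega> \<in> space M. (real n * \<epsilon>) ^ 4 \<le> (\<Sum>k<n. Z k \<omega>) ^ 4}" for n
  define C where "C = (s4 + 3 * s2\<^sup>2) / \<epsilon> ^ 4"
  have [measurable]: "Z k \<in> borel_measurable M" for k
    using indep[of "Suc k"] by (auto simp: indep_vars_def)
  have [measurable]: "A n \<in> sets M" for n
    unfolding A_def by measurable
  have "summable (\<lambda>n. prob (A n))"
  proof (rule summable_comparison_test')
    show "summable (\<lambda>n. C * inverse (real n ^ 2))"
      by (intro summable_mult inverse_power_summable) simp
    show "norm (prob (A n)) \<le> C * inverse (real n ^ 2)" if "1 \<le> n" for n
      using prob_abs_sum_ge_le[OF indep integrable centered second fourth \<open>0 < \<epsilon>\<close> that]
      by (simp add: A_def C_def)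
  qed
  then have "AE \<omega> in M. eventually (\<lambda>n. \<omega> \<in> space M - A n) sequentially"
    by (intro borel_cantelli_AE1) (auto simp: less_top[symmetric])
  then show ?thesis
  proof (rule AE_mp, intro AE_I2 impI)
    fix \<omega> assume "\<omega> \<in> space M" and "eventually (\<lambda>n. \<omega> \<in> space M - A n) sequentially"
    from this(2) show "eventually (\<lambda>n. \<bar>\<Sum>k<n. Z k \<omega>\<bar> \<le> real n * \<epsilon>) sequentially"
    proof (rule eventually_mono)
      fix n assume "\<omega> \<in> space M - A n"
      then have "\<bar>\<Sum>k<n. Z k \<omega>\<bar> ^ 4 < (real n * \<epsilon>) ^ 4"
        using \<open>\<omega> \<in> space M\<close> by (simp add: A_def not_le power_even_abs)
      then show "\<bar>\<Sum>k<n. Z k \<omega>\<bar> \<le> real n * \<epsilon>"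
        using power_less_imp_less_base[of "\<bar>\<Sum>k<n. Z k \<omega>\<bar>" 4 "real n * \<epsilon>"] \<open>0 < \<epsilon>\<close> by simp
    qed
  qed
qed

lemma strong_law_fourth_moment:
  fixes Z :: "nat \<Rightarrow> 'a \<Rightarrow> real"
  assumes indep: "\<And>n. indep_vars (\<lambda>_. borel) Z {..<n}"
    and integrable: "\<And>k. integrable M (\<lambda>\<omega>. Z k \<omega> ^ 4)"
    and centered: "\<And>k. expectation (Z k) = 0"
    and second: "\<And>k. expectation (\<lambda>\<omega>. Z k \<omega> ^ 2) = s2"
    and fourth: "\<And>k. expectation (\<lambda>\<omega>. Z k \<omega> ^ 4) = s4"
  shows "AE \<omega> in M. (\<lambda>n. (\<Sum>k<n. Z k \<omega>) / real n) \<longlonglongrightarrow> 0"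
proof -
  have "AE \<omega> in M. \<forall>m::nat. eventually (\<lambda>n. \<bar>\<Sum>k<n. Z k \<omega>\<bar> \<le> real n * inverse (real (Suc m))) sequentially"
    unfolding AE_all_countable
    by (intro allI AE_eventually_abs_sum_le[OF indep integrable centered second fourth]) simp
  then show ?thesis
  proof (rule AE_mp, intro AE_I2 impI tendstoI)
    fix \<omega> and e :: real
    assume bounds: "\<forall>m::nat. eventually (\<lambda>n. \<bar>\<Sum>k<n. Z k \<omega>\<bar> \<le> real n * inverse (real (Suc m))) sequentially"
      and "0 < e"
    obtain m where "inverse (real (Suc m)) < e"
      using ex_inverse_of_nat_less[OF \<open>0 < e\<close>] by (auto simp: gr0_conv_Suc)
    from bounds[rule_format, of m]
    show "eventually (\<lambda>n. dist ((\<Sum>k<n. Z k \<omega>) / real n) 0 < e) sequentially"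
    proof (rule eventually_mono)
      fix n assume bound: "\<bar>\<Sum>k<n. Z k \<omega>\<bar> \<le> real n * inverse (real (Suc m))"
      show "dist ((\<Sum>k<n. Z k \<omega>) / real n) 0 < e"
      proof (cases "n = 0")
        case False
        then have "\<bar>\<Sum>k<n. Z k \<omega>\<bar> / real n \<le> inverse (real (Suc m))"
          using bound by (simp add: divide_le_eq algebra_simps)
        then show ?thesis
          using \<open>inverse (real (Suc m)) < e\<close> by (simp add: abs_divide)
      qed (use \<open>0 < e\<close> in simp)
    qed
  qed
qed

lemma strong_law_iid:
  fixes X :: "nat \<Rightarrow> 'a \<Rightarrow> real" and h :: "real \<Rightarrow> real"
  assumes rv: "\<And>k. random_variable borel (X k)"
    and distr: "\<And>k. distr M lborel (X k) = \<nu>"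
    and indep: "\<And>n. indep_vars (\<lambda>_. borel) X {..<n}"
    and h [measurable]: "h \<in> borel_measurable borel"
    and integrable: "integrable \<nu> (\<lambda>x. h x ^ 4)"
  shows "AE \<omega> in M. (\<lambda>n. (\<Sum>k<n. h (X k \<omega>)) / real n) \<longlonglongrightarrow> integral\<^sup>L \<nu> h"
proof -
  have [measurable]: "X k \<in> measurable M lborel" for k
    using rv by simp
  interpret \<nu>: prob_space \<nu>
    using prob_space_distr[of "X 0" lborel] distr[of 0] rv[of 0] by simp
  have [measurable_cong]: "sets \<nu> = sets borel"
    using distr[of 0] by (metis sets_distr sets_lborel)
  define \<mu> where "\<mu> = integral\<^sup>L \<nu> h"
  define Z where "Z k \<omega> = h (X k \<omega>) - \<mu>" for k \<omega>
  have "integrable \<nu> (\<lambda>x. (h x - \<mu>) ^ 4)"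
    using \<nu>.integrable_power4_diff_const[of h] integrable by simp
  then have "integrable M (\<lambda>\<omega>. Z k \<omega> ^ 4)" for k
    using integrable_distr_eq[of "X k" M lborel "\<lambda>x. (h x - \<mu>) ^ 4"] distr[of k] rv[of k]
    by (simp add: Z_def)
  moreover have moment: "expectation (\<lambda>\<omega>. Z k \<omega> ^ j) = integral\<^sup>L \<nu> (\<lambda>x. (h x - \<mu>) ^ j)" for k j
    using integral_distr[of "X k" M lborel "\<lambda>x. (h x - \<mu>) ^ j"] distr[of k] rv[of k] by (simp add: Z_def)
  moreover have "expectation (Z k) = 0" for k
    using moment[of k 1] \<nu>.integrable_power_le[of h 4 1] integrable by (simp add: \<mu>_def \<nu>.prob_space)
  moreover have "indep_vars (\<lambda>_. borel) Z {..<n}" for n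
    unfolding Z_def by (rule indep_vars_compose2[OF indep]) measurable
  ultimately have "AE \<omega> in M. (\<lambda>n. (\<Sum>k<n. Z k \<omega>) / real n) \<longlonglongrightarrow> 0"
    by (intro strong_law_fourth_moment) auto
  then show ?thesis
  proof (rule AE_mp, intro AE_I2 impI)
    fix \<omega> assume "(\<lambda>n. (\<Sum>k<n. Z k \<omega>) / real n) \<longlonglongrightarrow> 0"
    then have "(\<lambda>n. (\<Sum>k<n. Z k \<omega>) / real n + \<mu>) \<longlonglongrightarrow> \<mu>"
      using tendsto_add[OF _ tendsto_const, of _ 0 sequentially \<mu>] by simp
    moreover have "eventually (\<lambda>n. (\<Sum>k<n. Z k \<omega>) / real n + \<mu> = (\<Sum>k<n. h (X k \<omega>)) / real n) sequentially"
      using eventually_gt_at_top[of 0]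
      by eventually_elim (simp add: Z_def sum_subtractf field_simps)
    ultimately show "(\<lambda>n. (\<Sum>k<n. h (X k \<omega>)) / real n) \<longlonglongrightarrow> integral\<^sup>L \<nu> h"
      unfolding \<mu>_def by (rule Lim_transform_eventually)
  qed
qed

end

lemma
  assumes "standard_brownian_motion M B"
  shows bm_incr_measurable: "bm_incr B dt k \<in> borel_measurable M"
    and distr_bm_incr: "0 < dt \<Longrightarrow> distr M lborel (bm_incr B dt k) = centered_normal (sqrt dt)"
    and indep_vars_bm_incr: "0 < dt \<Longrightarrow> prob_space.indep_vars M (\<lambda>_. borel) (bm_incr B dt) {..<n}"
proof -
  note bm = assms[unfolded standard_brownian_motion_def]
  show "bm_incr B dt k \<in> borel_measurable M"
    unfolding bm_incr_def using bm by (intro borel_measurable_diff) auto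
  assume "0 < dt"
  have "distributed M lborel (\<lambda>\<omega>. B t \<omega> - B s \<omega>) (normal_density 0 (sqrt (t - s)))"
    if "0 \<le> s" "s < t" for s t
    using bm that by blast
  from this[of "real k * dt" "real (Suc k) * dt"]
  have "distributed M lborel (bm_incr B dt k) (normal_density 0 (sqrt dt))"
    using \<open>0 < dt\<close> by (simp add: bm_incr_def[abs_def] algebra_simps)
  then show "distr M lborel (bm_incr B dt k) = centered_normal (sqrt dt)"
    unfolding centered_normal_def by (rule distributed_distr_eq_density)
  have indep_ts: "prob_space.indep_vars M (\<lambda>_. borel) (\<lambda>i \<omega>. B (ts (Suc i)) \<omega> - B (ts i) \<omega>) {..<n}"
    if "0 \<le> ts 0" "strict_mono ts" for ts
    using bm that by blast
  have "strict_mono (\<lambda>i. real i * dt)"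
    using \<open>0 < dt\<close> by (auto simp: strict_mono_def)
  from indep_ts[OF _ this] have "prob_space.indep_vars M (\<lambda>_. borel)
      (\<lambda>i \<omega>. B (real (Suc i) * dt) \<omega> - B (real i * dt) \<omega>) {..<n}"
    by auto
  then show "prob_space.indep_vars M (\<lambda>_. borel) (bm_incr B dt) {..<n}"
    by (simp only: bm_incr_def[abs_def])
qed

lemma ln_milstein_rho:
  fixes lam eps sig dt :: real
  defines "q \<equiv> 1 + (lam + eps\<^sup>2 / 2 - sig\<^sup>2 / 2) * dt"
  assumes "(x0, y0) \<noteq> (0, 0)" and "1/2 < q"
  shows "ln \<bar>milstein_rho lam eps sig x0 y0 B dt n \<omega>\<bar>
           = ln (sqrt (x0\<^sup>2 + y0\<^sup>2)) + (\<Sum>k<n. ln (milstein_factor q sig (bm_incr B dt k \<omega>)))"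
proof -
  have factor_pos: "0 < milstein_factor q sig x" for x
    using milstein_factor_ge[of q sig x] \<open>1/2 < q\<close> by simp
  have "0 < milstein_rho lam eps sig x0 y0 B dt n \<omega> \<and>
      ln (milstein_rho lam eps sig x0 y0 B dt n \<omega>)
        = ln (sqrt (x0\<^sup>2 + y0\<^sup>2)) + (\<Sum>k<n. ln (milstein_factor q sig (bm_incr B dt k \<omega>)))"
  proof (induction n)
    case 0
    then show ?case
      using \<open>(x0, y0) \<noteq> (0, 0)\<close> by (simp add: sum_power2_gt_zero_iff)
  next
    case (Suc n)
    have "milstein_rho lam eps sig x0 y0 B dt (Suc n) \<omega>
        = milstein_rho lam eps sig x0 y0 B dt n \<omega> * milstein_factor q sig (bm_incr B dt n \<omega>)"
      by (simp add: q_def milstein_factor_def)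
    then show ?case
      using Suc.IH factor_pos[of "bm_incr B dt n \<omega>"] by (simp only:) (simp add: ln_mult)
  qed
  then show ?thesis
    by simp
qed

lemma milstein_rho_exponent_limit:
  fixes lam eps sig dt :: real
  defines "q \<equiv> 1 + (lam + eps\<^sup>2 / 2 - sig\<^sup>2 / 2) * dt"
  assumes bm: "standard_brownian_motion M B" and "(x0, y0) \<noteq> (0, 0)"
    and "0 < dt" and q: "3/4 \<le> q" "q \<le> 5/4"
  shows "AE \<omega> in M. (\<lambda>n. ln \<bar>milstein_rho lam eps sig x0 y0 B dt n \<omega>\<bar> / (real n * dt))
           \<longlonglongrightarrow> (\<integral>x. ln (milstein_factor q sig x) \<partial>centered_normal (sqrt dt)) / dt"
proof -
  interpret prob_space M
    using bm by (simp add: standard_brownian_motion_def)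
  have "AE \<omega> in M. (\<lambda>n. (\<Sum>k<n. ln (milstein_factor q sig (bm_incr B dt k \<omega>))) / real n)
          \<longlonglongrightarrow> (\<integral>x. ln (milstein_factor q sig x) \<partial>centered_normal (sqrt dt))"
    using \<open>0 < dt\<close> bm_incr_measurable[OF bm] distr_bm_incr[OF bm] indep_vars_bm_incr[OF bm]
      integrable_centered_normal_ln_milstein_factor_power[OF q, of "sqrt dt" sig 4]
    by (intro strong_law_iid) (auto simp: milstein_factor_def)
  then show ?thesis
  proof (rule AE_mp, intro AE_I2 impI)
    fix \<omega>
    assume "(\<lambda>n. (\<Sum>k<n. ln (milstein_factor q sig (bm_incr B dt k \<omega>))) / real n)
          \<longlonglongrightarrow> (\<integral>x. ln (milstein_factor q sig x) \<partial>centered_normal (sqrt dt))"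
    then have "(\<lambda>n. ln (sqrt (x0\<^sup>2 + y0\<^sup>2)) / dt / real n
          + (\<Sum>k<n. ln (milstein_factor q sig (bm_incr B dt k \<omega>))) / real n / dt)
        \<longlonglongrightarrow> 0 + (\<integral>x. ln (milstein_factor q sig x) \<partial>centered_normal (sqrt dt)) / dt"
      using \<open>0 < dt\<close> by (intro tendsto_add tendsto_divide tendsto_const lim_const_over_n) auto
    moreover have "ln \<bar>milstein_rho lam eps sig x0 y0 B dt n \<omega>\<bar> / (real n * dt)
        = ln (sqrt (x0\<^sup>2 + y0\<^sup>2)) / dt / real n
          + (\<Sum>k<n. ln (milstein_factor q sig (bm_incr B dt k \<omega>))) / real n / dt" for n
      \<comment> \<open>also for \<open>n = 0\<close>, where both sides vanish because division by zero yields zero\<close>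
      using ln_milstein_rho[OF \<open>(x0, y0) \<noteq> (0, 0)\<close>, of lam eps sig dt B n \<omega>] q
      by (simp add: q_def add_divide_distrib divide_divide_eq_left mult.commute)
    ultimately show "(\<lambda>n. ln \<bar>milstein_rho lam eps sig x0 y0 B dt n \<omega>\<bar> / (real n * dt))
        \<longlonglongrightarrow> (\<integral>x. ln (milstein_factor q sig x) \<partial>centered_normal (sqrt dt)) / dt"
      by simp
  qed
qed

lemma AE_milstein_rho_limsup_bounds:
  fixes lam eps sig dt Cm Cp :: real
  defines "a \<equiv> lam + eps\<^sup>2 / 2 - sig\<^sup>2 / 2"
  assumes bm: "standard_brownian_motion M B" and "(x0, y0) \<noteq> (0, 0)"
    and dt: "0 < dt" "dt \<le> 1" "\<bar>a\<bar> * dt \<le> 1/4"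
    and C: "sig\<^sup>2 * \<bar>a\<bar> + sig ^ 4 + 20 * \<bar>sig\<bar> ^ 3 + 20 * sig ^ 6 \<le> Cm"
      "sig\<^sup>2 * \<bar>a\<bar> + sig ^ 4 + 20 * \<bar>sig\<bar> ^ 3 + 20 * sig ^ 6 \<le> Cp"
  shows "AE \<omega> in M.
      limsup (\<lambda>n. ereal (ln \<bar>milstein_rho lam eps sig x0 y0 B dt n \<omega>\<bar> / (real n * dt)))
        \<ge> ereal (ln (1 + a * dt) / dt - Cm * sqrt dt)
    \<and> limsup (\<lambda>n. ereal (ln \<bar>milstein_rho lam eps sig x0 y0 B dt n \<omega>\<bar> / (real n * dt)))
        \<le> ereal (ln (1 + a * dt) / dt + Cp * sqrt dt)"
proof -
  define \<mu> where "\<mu> = (\<integral>x. ln (milstein_factor (1 + a * dt) sig x) \<partial>centered_normal (sqrt dt)) / dt"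
  have "\<bar>\<mu> - ln (1 + a * dt) / dt\<bar> \<le> (sig\<^sup>2 * \<bar>a\<bar> + sig ^ 4 + 20 * \<bar>sig\<bar> ^ 3 + 20 * sig ^ 6) * sqrt dt"
    using integral_ln_milstein_factor_error_le[OF dt, of sig] dt
    by (simp add: \<mu>_def divide_le_eq diff_divide_distrib[symmetric] abs_divide mult_ac)
  moreover have "0 \<le> sqrt dt"
    using dt by simp
  ultimately have bounds: "ln (1 + a * dt) / dt - Cm * sqrt dt \<le> \<mu>" "\<mu> \<le> ln (1 + a * dt) / dt + Cp * sqrt dt"
    using mult_right_mono[OF C(1)] mult_right_mono[OF C(2)] unfolding abs_le_iff by fastforce+
  have "AE \<omega> in M. (\<lambda>n. ln \<bar>milstein_rho lam eps sig x0 y0 B dt n \<omega>\<bar> / (real n * dt)) \<longlonglongrightarrow> \<mu>"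
    using milstein_rho_exponent_limit[OF bm \<open>(x0, y0) \<noteq> (0, 0)\<close> \<open>0 < dt\<close>] one_plus_mult_bounds[of dt a] dt
    by (simp add: \<mu>_def a_def)
  then show ?thesis
  proof (rule AE_mp, intro AE_I2 impI)
    fix \<omega>
    assume "(\<lambda>n. ln \<bar>milstein_rho lam eps sig x0 y0 B dt n \<omega>\<bar> / (real n * dt)) \<longlonglongrightarrow> \<mu>"
    then have "limsup (\<lambda>n. ereal (ln \<bar>milstein_rho lam eps sig x0 y0 B dt n \<omega>\<bar> / (real n * dt))) = ereal \<mu>"
      by (intro lim_imp_Limsup) simp_all
    then show "limsup (\<lambda>n. ereal (ln \<bar>milstein_rho lam eps sig x0 y0 B dt n \<omega>\<bar> / (real n * dt)))
        \<ge> ereal (ln (1 + a * dt) / dt - Cm * sqrt dt)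
      \<and> limsup (\<lambda>n. ereal (ln \<bar>milstein_rho lam eps sig x0 y0 B dt n \<omega>\<bar> / (real n * dt)))
        \<le> ereal (ln (1 + a * dt) / dt + Cp * sqrt dt)"
      using bounds by simp
  qed
qed

theorem proposition2p4:
  fixes M :: "'a measure" and B :: "real \<Rightarrow> 'a \<Rightarrow> real"
    and lam eps sig x0 y0 :: real
  assumes "standard_brownian_motion M B"
    and "(x0, y0) \<noteq> (0, 0)"
  shows "\<exists>dt0 > 0. \<exists>Cm Cp. 0 < Cm \<and> Cm < Cp \<and>
    (\<forall>dt. 0 < dt \<and> dt < 1 \<and> dt < dt0 \<longrightarrow>
      (AE \<omega> in M.
         limsup (\<lambda>n. ereal (ln \<bar>milstein_rho lam eps sig x0 y0 B dt n \<omega>\<bar> / (real n * dt)))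
           \<ge> ereal (ln (1 + (lam + eps\<^sup>2 / 2 - sig\<^sup>2 / 2) * dt) / dt - Cm * sqrt dt)
       \<and> limsup (\<lambda>n. ereal (ln \<bar>milstein_rho lam eps sig x0 y0 B dt n \<omega>\<bar> / (real n * dt)))
           \<le> ereal (ln (1 + (lam + eps\<^sup>2 / 2 - sig\<^sup>2 / 2) * dt) / dt + Cp * sqrt dt)))"
proof -
  define a where "a = lam + eps\<^sup>2 / 2 - sig\<^sup>2 / 2"
  define K where "K = sig\<^sup>2 * \<bar>a\<bar> + sig ^ 4 + 20 * \<bar>sig\<bar> ^ 3 + 20 * sig ^ 6"
  have "0 \<le> K"
    by (simp add: K_def)
  have "AE \<omega> in M.
         limsup (\<lambda>n. ereal (ln \<bar>milstein_rho lam eps sig x0 y0 B dt n \<omega>\<bar> / (real n * dt)))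
           \<ge> ereal (ln (1 + a * dt) / dt - (K + 1) * sqrt dt)
       \<and> limsup (\<lambda>n. ereal (ln \<bar>milstein_rho lam eps sig x0 y0 B dt n \<omega>\<bar> / (real n * dt)))
           \<le> ereal (ln (1 + a * dt) / dt + (K + 2) * sqrt dt)"
    if "0 < dt" "dt < 1" "dt < 1 / (4 * (\<bar>a\<bar> + 1))" for dt
  proof -
    have "\<bar>a\<bar> * dt \<le> 1/4"
      using that by (simp add: field_simps)
    with that show ?thesis
      using AE_milstein_rho_limsup_bounds[OF assms, where dt=dt and Cm="K + 1" and Cp="K + 2"]
      by (simp add: a_def K_def)
  qed
  moreover have "0 < 1 / (4 * (\<bar>a\<bar> + 1))" "0 < K + 1" "K + 1 < K + 2"
    using \<open>0 \<le> K\<close> by simp_all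
  ultimately show ?thesis
    unfolding a_def[symmetric] by blast
qed

end
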